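(* Let $\mathcal{M}$ be a separable metric space, $f:\mathcal{M}\to\mathcal{M}$ continuous, $\mathcal{X}\subseteq\mathcal{M}$ forward invariant under $f$, $\mathcal{Z}$ a separable metric space, $g:\mathcal{Z}\to\mathcal{Z}$, and $F:\mathcal{X}\to\mathcal{Z}$ continuous with $F\circ f=g\circ F$ on $\mathcal{X}$. For any $\xi\in\mathcal{X}$, if the trajectory through $\xi$ is forward precompact in $\mathcal{X}$, then $F(\xi)\in D^+_{\mathcal{Z}}(F(\omega_{\mathcal{X}}(\xi)))$.
   Context: $\omega_{\mathcal{X}}(\xi)$ is the set of $x\in\mathcal{X}$ such that $f^{k_j}(\xi)\to x$ for some indices $k_j\to\infty$; $\omega_{\mathcal{Z}}(\zeta)$ is defined analogously for $g$ on $\mathcal{Z}$. $D^+_{\mathcal{Z}}(\Omega)=\{\zeta\in\mathcal{Z}\mid\omega_{\mathcal{Z}}(\zeta)=\Omega\}$. The trajectory through $\xi$ is forward precompact in $\mathcal{X}$ if the closure in $\mathcal{X}$ of $\{f^k(\xi)\mid k\in\mathbb{N}\}$ is compact. *)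

theory Defs
  imports "HOL-Analysis.Analysis"
begin

definition omega_limit :: "'a set \<Rightarrow> ('a \<Rightarrow> 'a) \<Rightarrow> 'a \<Rightarrow> 'a::topological_space set" where
  "omega_limit S f \<xi> = {x \<in> S. \<exists>k::nat \<Rightarrow> nat. filterlim k at_top sequentially \<and>
        ((\<lambda>j. (f ^^ k j) \<xi>) \<longlongrightarrow> x) sequentially}"

definition D_plus :: "'a set \<Rightarrow> ('a \<Rightarrow> 'a) \<Rightarrow> 'a set \<Rightarrow> 'a::topological_space set" where
  "D_plus S g \<Omega> = {\<zeta> \<in> S. omega_limit S g \<zeta> = \<Omega>}"

definition forward_precompact :: "'a::topological_space set \<Rightarrow> ('a \<Rightarrow> 'a) \<Rightarrow> 'a \<Rightarrow> bool" where
  "forward_precompact X f \<xi> \<longleftrightarrow>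
     compactin (subtopology euclidean X) (X \<inter> closure (range (\<lambda>k. (f ^^ k) \<xi>)))"

end

theory Submission
  imports Defs
begin

text \<open>A semiconjugacy F maps f-orbits to g-orbits, so by continuity it maps limits of
  f-iterates to limits of g-iterates; conversely, precompactness of the f-orbit lets every
  convergent subsequence of g-iterates of F \<xi> be refined to one whose f-iterates converge,
  and uniqueness of limits identifies the two limits.\<close>

lemma funpow_in_invariant:
  assumes "f ` X \<subseteq> X" and "\<xi> \<in> X"
  shows "(f ^^ k) \<xi> \<in> X"
  by (induction k) (use assms in auto)

lemma funpow_semiconj:
  assumes "f ` X \<subseteq> X" and "\<forall>x\<in>X. F (f x) = g (F x)" and "\<xi> \<in> X"
  shows "(g ^^ k) (F \<xi>) = F ((f ^^ k) \<xi>)"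
  by (induction k) (use assms funpow_in_invariant[OF assms(1,3)] in auto)

lemma forward_precompact_compact:
  "forward_precompact X f \<xi> \<Longrightarrow> compact (X \<inter> closure (range (\<lambda>k. (f ^^ k) \<xi>)))"
  unfolding forward_precompact_def by (simp add: compactin_subtopology compactin_euclidean_iff)

lemma image_omega_limit_subset:
  fixes F :: "'a::topological_space \<Rightarrow> 'b::topological_space"
  assumes "f ` X \<subseteq> X" and "continuous_on X F" and "\<forall>x\<in>X. F (f x) = g (F x)"
    and "\<xi> \<in> X"
  shows "F ` omega_limit X f \<xi> \<subseteq> omega_limit UNIV g (F \<xi>)"
proof
  fix z assume "z \<in> F ` omega_limit X f \<xi>"
  then obtain x k where x: "x \<in> X" "z = F x" and k: "filterlim k at_top sequentially"
    and lim: "((\<lambda>j. (f ^^ k j) \<xi>) \<longlongrightarrow> x) sequentially"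
    unfolding omega_limit_def by auto
  have "((\<lambda>j. F ((f ^^ k j) \<xi>)) \<longlongrightarrow> F x) sequentially"
    using continuous_on_tendsto_compose[OF assms(2) lim x(1)]
      funpow_in_invariant[OF assms(1,4)] by auto
  then show "z \<in> omega_limit UNIV g (F \<xi>)"
    unfolding omega_limit_def using x k funpow_semiconj[OF assms(1,3,4)] by auto
qed

lemma omega_limit_subset_image:
  fixes F :: "'a::first_countable_topology \<Rightarrow> 'b::t2_space"
  assumes "f ` X \<subseteq> X" and "continuous_on X F" and "\<forall>x\<in>X. F (f x) = g (F x)"
    and "\<xi> \<in> X" and "forward_precompact X f \<xi>"
  shows "omega_limit UNIV g (F \<xi>) \<subseteq> F ` omega_limit X f \<xi>"
proof
  fix z assume "z \<in> omega_limit UNIV g (F \<xi>)"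
  then obtain k where k: "filterlim k at_top sequentially"
    and lim_g: "((\<lambda>j. (g ^^ k j) (F \<xi>)) \<longlongrightarrow> z) sequentially"
    unfolding omega_limit_def by auto
  define K where "K = X \<inter> closure (range (\<lambda>k. (f ^^ k) \<xi>))"
  have "seq_compact K"
    unfolding K_def by (rule compact_imp_seq_compact[OF forward_precompact_compact[OF assms(5)]])
  moreover have "\<forall>j. (f ^^ k j) \<xi> \<in> K"
    using funpow_in_invariant[OF assms(1,4)] closure_subset[of "range (\<lambda>k. (f ^^ k) \<xi>)"]
    unfolding K_def by blast
  ultimately obtain x r where "x \<in> K" and r: "strict_mono r"
    and "((\<lambda>j. (f ^^ k j) \<xi>) \<circ> r) \<longlonglongrightarrow> x"
    by (rule seq_compactE)
  then have lim_f: "((\<lambda>j. (f ^^ k (r j)) \<xi>) \<longlongrightarrow> x) sequentially"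
    by (simp add: comp_def)
  have "x \<in> X" using \<open>x \<in> K\<close> K_def by auto
  have kr: "filterlim (k \<circ> r) at_top sequentially"
    using filterlim_compose[OF k filterlim_subseq[OF r]] by (simp add: comp_def)
  have "x \<in> omega_limit X f \<xi>"
    unfolding omega_limit_def using \<open>x \<in> X\<close> kr lim_f by (auto simp: comp_def)
  have "((\<lambda>j. F ((f ^^ k (r j)) \<xi>)) \<longlongrightarrow> F x) sequentially"
    using continuous_on_tendsto_compose[OF assms(2) lim_f \<open>x \<in> X\<close>]
      funpow_in_invariant[OF assms(1,4)] by auto
  moreover have "((\<lambda>j. F ((f ^^ k (r j)) \<xi>)) \<longlongrightarrow> z) sequentially"
    using LIMSEQ_subseq_LIMSEQ[OF lim_g r] funpow_semiconj[OF assms(1,3,4)]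
    by (simp add: comp_def)
  ultimately have "z = F x" using LIMSEQ_unique by blast
  then show "z \<in> F ` omega_limit X f \<xi>" using \<open>x \<in> omega_limit X f \<xi>\<close> by blast
qed

lemma omega_limit_semiconj_image:
  fixes F :: "'a::first_countable_topology \<Rightarrow> 'b::t2_space"
  assumes "f ` X \<subseteq> X" and "continuous_on X F" and "\<forall>x\<in>X. F (f x) = g (F x)"
    and "\<xi> \<in> X" and "forward_precompact X f \<xi>"
  shows "omega_limit UNIV g (F \<xi>) = F ` omega_limit X f \<xi>"
  using image_omega_limit_subset[OF assms(1-4)] omega_limit_subset_image[OF assms]
  by (rule antisym[rotated])

theorem corollary26:
  fixes f :: "'m::metric_space \<Rightarrow> 'm" and X :: "'m set"
    and g :: "'z::metric_space \<Rightarrow> 'z" and F :: "'m \<Rightarrow> 'z" and \<xi> :: 'm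
  assumes "separable_space (euclidean :: 'm topology)"
    and "continuous_on UNIV f"
    and "f ` X \<subseteq> X"
    and "separable_space (euclidean :: 'z topology)"
    and "continuous_on X F"
    and "\<forall>x\<in>X. F (f x) = g (F x)"
    and "\<xi> \<in> X"
    and "forward_precompact X f \<xi>"
  shows "F \<xi> \<in> D_plus UNIV g (F ` omega_limit X f \<xi>)"
  using omega_limit_semiconj_image[OF assms(3,5-8)] unfolding D_plus_def by blast

end
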